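(* There is no probability rule for discrete many-worlds theory satisfying Axioms (A1)–(A3).
   Context: Discrete many-worlds theory is defined as follows. The worlds are the vectors $\lvert n\rangle$, $n\in\{0,1,2,\dots\}$, of a countably infinite basis. The allowed states are the real vectors $v=\sum_n v_n\lvert n\rangle$ in which every $v_n$ is a nonnegative integer and $\sum_n v_n<\infty$; here $v_n$ is the amplitude of world $n$. The allowed transformations are the linear maps $T$ in which every matrix element $T_{ij}$ is a nonnegative integer and $\sum_i T_{ij}<\infty$ for every $j$, acting by $(Tv)_i=\sum_j T_{ij}v_j$. A probability rule assigns to each allowed state $v$ a sequence $(p_n(v))_{n\ge 0}$ of nonnegative reals with $\sum_n p_n(v)=1$. The axioms are: (A1) Present state dependence: $p_n$ depends only on the present state $v$, so $p$ is a function of the state alone. (A2) Weak connection with amplitudes: for every allowed state $v$, $v_n=0$ implies $p_n(v)=0$. (A3) Weak connection with transformations: for every allowed state $v$ and allowed transformation $T$, and every partition of $\{0,1,2,\dots\}$ into subsets $\mathcal S_k$ such that $T_{ij}=0$ whenever $i$ and $j$ lie in different subsets, we have $\sum_{n\in\mathcal S_k}p_n(v)=\sum_{n\in\mathcal S_k}p_n(Tv)$ for every $k$. *)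

theory Defs
  imports "HOL-Analysis.Analysis"
begin

text \<open>Allowed states: amplitude vectors with nonnegative integer entries and finite
  total amplitude, i.e. finitely supported functions nat => nat.\<close>
definition allowed_state :: "(nat \<Rightarrow> nat) \<Rightarrow> bool" where
  "allowed_state v \<longleftrightarrow> finite {n. v n \<noteq> 0}"

text \<open>Allowed transformations: matrices T i j of nonnegative integers with every
  column sum finite, i.e. finitely many nonzero entries in every column.\<close>
definition allowed_trans :: "(nat \<Rightarrow> nat \<Rightarrow> nat) \<Rightarrow> bool" where
  "allowed_trans T \<longleftrightarrow> (\<forall>j. finite {i. T i j \<noteq> 0})"

definition apply_trans :: "(nat \<Rightarrow> nat \<Rightarrow> nat) \<Rightarrow> (nat \<Rightarrow> nat) \<Rightarrow> nat \<Rightarrow> nat" where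
  "apply_trans T v = (\<lambda>i. \<Sum>j\<in>{j. v j \<noteq> 0}. T i j * v j)"

text \<open>A probability rule (A1 is built in: p is a function of the present state only),
  assigning to each (nonzero) allowed state a probability sequence.\<close>
definition prob_rule :: "((nat \<Rightarrow> nat) \<Rightarrow> nat \<Rightarrow> real) \<Rightarrow> bool" where
  "prob_rule p \<longleftrightarrow>
     (\<forall>v. allowed_state v \<and> v \<noteq> (\<lambda>_. 0) \<longrightarrow> (\<forall>n. p v n \<ge> 0) \<and> (p v) sums 1)"

definition axiom_A2 :: "((nat \<Rightarrow> nat) \<Rightarrow> nat \<Rightarrow> real) \<Rightarrow> bool" where
  "axiom_A2 p \<longleftrightarrow>
     (\<forall>v n. allowed_state v \<and> v \<noteq> (\<lambda>_. 0) \<and> v n = 0 \<longrightarrow> p v n = 0)"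

text \<open>(A3) weak connection with transformations. A partition of nat into subsets
  S_k is given by a block-label function c (S_k = {n. c n = k}).\<close>
definition axiom_A3 :: "((nat \<Rightarrow> nat) \<Rightarrow> nat \<Rightarrow> real) \<Rightarrow> bool" where
  "axiom_A3 p \<longleftrightarrow>
     (\<forall>v T (c :: nat \<Rightarrow> nat).
        allowed_state v \<and> v \<noteq> (\<lambda>_. 0) \<and> allowed_trans T \<and> apply_trans T v \<noteq> (\<lambda>_. 0) \<and>
        (\<forall>i j. c i \<noteq> c j \<longrightarrow> T i j = 0) \<longrightarrow>
        (\<forall>k. infsum (p v) {n. c n = k} = infsum (p (apply_trans T v)) {n. c n = k}))"

end

theory Submission
  imports Defs
begin

text \<open>Deleting any single world a from a state with at least two worlds is a diagonal
  transformation, so (A3) with the partition into singletons gives p v a = p (v(a := 0)) a,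
  which vanishes by (A2). Hence every world of such a state has probability zero,
  contradicting that the probabilities sum to one.\<close>

definition delete_world :: "nat \<Rightarrow> nat \<Rightarrow> nat \<Rightarrow> nat" where
  "delete_world a = (\<lambda>i j. if i = j \<and> i \<noteq> a then 1 else 0)"

lemma allowed_trans_delete_world: "allowed_trans (delete_world a)"
  unfolding allowed_trans_def
proof
  fix j show "finite {i. delete_world a i j \<noteq> 0}"
    by (rule finite_subset[of _ "{j}"]) (auto simp: delete_world_def)
qed

lemma apply_trans_delete_world:
  assumes "allowed_state v"
  shows "apply_trans (delete_world a) v = v(a := 0)"
proof
  fix i
  have "(\<Sum>j\<in>{j. v j \<noteq> 0}. delete_world a i j * v j)
        = (\<Sum>j\<in>{j. v j \<noteq> 0}. if i = j then (if i = a then 0 else v j) else 0)"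
    by (rule sum.cong) (auto simp: delete_world_def)
  also have "\<dots> = (v(a := 0)) i"
    using assms by (simp add: allowed_state_def)
  finally show "apply_trans (delete_world a) v i = (v(a := 0)) i"
    by (simp add: apply_trans_def)
qed

lemma allowed_state_fun_upd_zero:
  "allowed_state v \<Longrightarrow> allowed_state (v(a := 0))"
  unfolding allowed_state_def by (rule finite_subset) auto

lemma axiom_A3_diagonal:
  assumes "axiom_A3 p" "allowed_state v" "v \<noteq> (\<lambda>_. 0)" "allowed_trans T"
    "apply_trans T v \<noteq> (\<lambda>_. 0)" "\<And>i j. i \<noteq> j \<Longrightarrow> T i j = 0"
  shows "p v n = p (apply_trans T v) n"
proof -
  have "infsum (p v) {m. id m = n} = infsum (p (apply_trans T v)) {m. id m = n}"
    using assms(1)[unfolded axiom_A3_def, rule_format, of v T id] assms(2-) by simp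
  then show ?thesis by simp
qed

lemma prob_world_zero_if_two_worlds:
  assumes A2: "axiom_A2 p" and A3: "axiom_A3 p" and v: "allowed_state v"
    and "v b \<noteq> 0" "b \<noteq> a"
  shows "p v a = 0"
proof -
  have v0: "v \<noteq> (\<lambda>_. 0)" using \<open>v b \<noteq> 0\<close> by auto
  have w0: "v(a := 0) \<noteq> (\<lambda>_. 0)" using \<open>v b \<noteq> 0\<close> \<open>b \<noteq> a\<close> by (metis fun_upd_other)
  have "p v a = p (apply_trans (delete_world a) v) a"
    by (rule axiom_A3_diagonal[OF A3 v v0 allowed_trans_delete_world])
      (simp_all add: apply_trans_delete_world[OF v] w0, simp add: delete_world_def)
  also have "\<dots> = p (v(a := 0)) a"
    by (simp add: apply_trans_delete_world[OF v])
  also have "\<dots> = 0"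
    using A2 allowed_state_fun_upd_zero[OF v] w0 unfolding axiom_A2_def by simp
  finally show ?thesis .
qed

theorem theorem5:
  shows "\<not> (\<exists>p. prob_rule p \<and> axiom_A2 p \<and> axiom_A3 p)"
proof
  assume "\<exists>p. prob_rule p \<and> axiom_A2 p \<and> axiom_A3 p"
  then obtain p where rule: "prob_rule p" and A2: "axiom_A2 p" and A3: "axiom_A3 p"
    by blast
  define v :: "nat \<Rightarrow> nat" where "v = (\<lambda>n. if n \<le> 1 then 1 else 0)"
  have v: "allowed_state v"
    unfolding allowed_state_def v_def by (rule finite_subset[of _ "{0, 1}"]) auto
  have v0: "v 0 \<noteq> 0" and v1: "v 1 \<noteq> 0" by (simp_all add: v_def)
  have "p v n = 0" for n
  proof (cases "n = 0")
    case True
    then show ?thesis using prob_world_zero_if_two_worlds[OF A2 A3 v v1] by simp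
  next
    case False
    then show ?thesis using prob_world_zero_if_two_worlds[OF A2 A3 v v0] by simp
  qed
  then have "p v = (\<lambda>_. 0)" by blast
  moreover have "p v sums 1"
    using rule v v0 unfolding prob_rule_def by blast
  ultimately have "(0::real) = 1"
    using sums_unique2 sums_zero by metis
  then show False by simp
qed

end
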